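(* Let $d\ge1$ and let $T:\mathbb{R}^d\to\mathbb{R}^d$ be the translation $T(x)=x+e_1$, where $e_1=(1,0,\ldots,0)$. Then $T$ does not satisfy the topological shadowing property.
   Context: Let $(X,d)$ be a metric space and $f:X\to X$ a homeomorphism; $\mathcal{C}^+=\{\epsilon:X\to\mathbb{R}^+ : \epsilon \text{ continuous}\}$. For $\delta\in\mathcal{C}^+$, a sequence $\{x_n\}_{n\in\mathbb{Z}}\subset X$ is a $\delta$-pseudo-orbit of $f$ if $d(f(x_n),x_{n+1})<\delta(f(x_n))$ for every $n\in\mathbb{Z}$. For $\epsilon\in\mathcal{C}^+$, the sequence $\{x_n\}$ is $\epsilon$-shadowed by an orbit if there is $y\in X$ with $d(f^n(y),x_n)<\epsilon(x_n)$ for every $n\in\mathbb{Z}$. The homeomorphism $f$ satisfies the topological shadowing property if for every $\epsilon\in\mathcal{C}^+$ there exists $\delta\in\mathcal{C}^+$ such that every $\delta$-pseudo-orbit is $\epsilon$-shadowed by an orbit. $\mathbb{R}^d$ carries the Euclidean metric. *)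

theory Defs
  imports "HOL-Analysis.Analysis"
begin

definition pos_cont :: "('a::metric_space \<Rightarrow> real) set" where
  "pos_cont = {e. continuous_on UNIV e \<and> (\<forall>x. e x > 0)}"

definition pseudo_orbit :: "('a::metric_space \<Rightarrow> 'a) \<Rightarrow> ('a \<Rightarrow> real) \<Rightarrow> (int \<Rightarrow> 'a) \<Rightarrow> bool" where
  "pseudo_orbit f \<delta> xs \<longleftrightarrow> (\<forall>n. dist (f (xs n)) (xs (n + 1)) < \<delta> (f (xs n)))"

definition zorbit :: "('a \<Rightarrow> 'a) \<Rightarrow> int \<Rightarrow> 'a \<Rightarrow> 'a" where
  "zorbit f n y = (if n \<ge> 0 then (f ^^ nat n) y else (inv f ^^ nat (- n)) y)"

definition shadowed :: "('a::metric_space \<Rightarrow> 'a) \<Rightarrow> ('a \<Rightarrow> real) \<Rightarrow> (int \<Rightarrow> 'a) \<Rightarrow> bool" where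
  "shadowed f \<epsilon> xs \<longleftrightarrow> (\<exists>y. \<forall>n. dist (zorbit f n y) (xs n) < \<epsilon> (xs n))"

definition topological_shadowing :: "('a::metric_space \<Rightarrow> 'a) \<Rightarrow> bool" where
  "topological_shadowing f \<longleftrightarrow>
     (\<forall>\<epsilon>\<in>pos_cont. \<exists>\<delta>\<in>pos_cont. \<forall>xs. pseudo_orbit f \<delta> xs \<longrightarrow> shadowed f \<epsilon> xs)"

end

theory Submission
  imports Defs "HOL-Real_Asymp.Real_Asymp"
begin

text \<open>
  Take \<open>\<epsilon> x = 1 / (1 + \<parallel>x\<parallel>)\<close>, which decays at infinity. Whatever \<open>\<delta>\<close> is, the
  orbit of \<open>0\<close> with a single jump of size less than \<open>\<delta> a\<close> after time \<open>0\<close> is a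
  \<open>\<delta>\<close>-pseudo-orbit. An orbit \<open>\<epsilon>\<close>-shadowing it would be an exact translate
  \<open>y + n a\<close>, and since \<open>\<epsilon>\<close> tends to \<open>0\<close> along both ends of the pseudo-orbit,
  \<open>y\<close> would have to equal both \<open>0\<close> and the jump vector.
\<close>

lemma zorbit_translation:
  fixes a :: "'a::real_vector"
  shows "zorbit (\<lambda>x. x + a) n y = y + of_int n *\<^sub>R a"
proof -
  have inv: "inv (\<lambda>x. x + a) = (\<lambda>x. x - a)"
    by (rule ext, rule inv_f_eq) (auto intro: injI)
  have forward: "((\<lambda>x. x + a) ^^ k) y = y + real k *\<^sub>R a" for k
    by (induction k) (auto simp: algebra_simps)
  have backward: "((\<lambda>x. x - a) ^^ k) y = y - real k *\<^sub>R a" for k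
    by (induction k) (auto simp: algebra_simps)
  show ?thesis
  proof (cases "n \<ge> 0")
    case True
    then show ?thesis
      using forward[of "nat n"] by (simp add: zorbit_def inv)
  next
    case False
    then have "real (nat (- n)) = - of_int n"
      by simp
    then show ?thesis
      using False backward[of "nat (- n)"] by (simp add: zorbit_def inv algebra_simps)
  qed
qed

lemma inverse_one_plus_norm_pos_cont: "(\<lambda>x::'a::real_normed_vector. 1 / (1 + norm x)) \<in> pos_cont"
proof -
  have pos: "0 < 1 + norm x" for x :: 'a
    by (smt (verit) norm_ge_zero)
  then have "continuous_on UNIV (\<lambda>x::'a. 1 / (1 + norm x))"
    by (intro continuous_intros) (simp add: less_imp_neq[OF pos, symmetric])
  with pos show ?thesis
    by (simp add: pos_cont_def)
qed

definition jump_orbit :: "'a::real_vector \<Rightarrow> 'a \<Rightarrow> int \<Rightarrow> 'a" where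
  "jump_orbit a v n = of_int n *\<^sub>R a + (if n \<ge> 1 then v else 0)"

lemma pseudo_orbit_jump_orbit:
  fixes a v :: "'a::real_normed_vector"
  assumes "\<forall>x. \<delta> x > 0" and "norm v < \<delta> a"
  shows "pseudo_orbit (\<lambda>x. x + a) \<delta> (jump_orbit a v)"
  unfolding pseudo_orbit_def
proof
  fix n :: int
  show "dist (jump_orbit a v n + a) (jump_orbit a v (n + 1)) < \<delta> (jump_orbit a v n + a)"
  proof (cases "n = 0")
    case True
    then show ?thesis
      using assms(2) by (simp add: jump_orbit_def dist_norm)
  next
    case False
    then have "jump_orbit a v n + a = jump_orbit a v (n + 1)"
      by (simp add: jump_orbit_def algebra_simps)
    then show ?thesis
      using assms(1) by simp
  qed
qed

lemma eq_if_dist_less_along_ray: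
  fixes a u w y :: "'a::real_normed_vector"
  assumes "a \<noteq> 0" and close: "\<And>m::nat. dist y w < 1 / (1 + norm (of_nat m *\<^sub>R a + u))"
  shows "y = w"
proof -
  have "filterlim (\<lambda>m::nat. 1 + norm (of_nat m *\<^sub>R a + u)) at_top sequentially"
  proof (rule filterlim_at_top_mono)
    show "filterlim (\<lambda>m. real m * norm a - norm u + 1) at_top sequentially"
      using assms(1) by real_asymp
    show "\<forall>\<^sub>F m in sequentially. real m * norm a - norm u + 1 \<le> 1 + norm (of_nat m *\<^sub>R a + u)"
      using norm_diff_ineq[of "of_nat m *\<^sub>R a" u for m] by auto
  qed
  then have "(\<lambda>m. 1 / (1 + norm (of_nat m *\<^sub>R a + u))) \<longlonglongrightarrow> 0"
    unfolding inverse_eq_divide[symmetric] by (rule tendsto_inverse_0_at_top)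
  then have "dist y w \<le> 0"
    by (rule LIMSEQ_le_const) (use close less_imp_le in blast)
  then show ?thesis
    by simp
qed

lemma jump_orbit_not_shadowed:
  fixes a v :: "'a::real_normed_vector"
  assumes "a \<noteq> 0" and "v \<noteq> 0"
  shows "\<not> shadowed (\<lambda>x. x + a) (\<lambda>x. 1 / (1 + norm x)) (jump_orbit a v)"
proof
  assume "shadowed (\<lambda>x. x + a) (\<lambda>x. 1 / (1 + norm x)) (jump_orbit a v)"
  then obtain y where y: "\<And>n. dist (y + of_int n *\<^sub>R a) (jump_orbit a v n)
      < 1 / (1 + norm (jump_orbit a v n))"
    unfolding shadowed_def zorbit_translation by blast
  have "y = 0"
  proof (rule eq_if_dist_less_along_ray[of "- a"])
    show "- a \<noteq> 0"
      using assms(1) by simp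
  next
    fix m :: nat
    have "jump_orbit a v (- int m) = of_nat m *\<^sub>R (- a) + 0"
      by (cases "m = 0") (auto simp: jump_orbit_def)
    then show "dist y 0 < 1 / (1 + norm (of_nat m *\<^sub>R (- a) + 0))"
      using y[of "- int m"] by (simp add: dist_norm)
  qed
  moreover have "y = v"
  proof (rule eq_if_dist_less_along_ray[OF assms(1)])
    fix m :: nat
    have "jump_orbit a v (int (Suc m)) = of_nat (Suc m) *\<^sub>R a + v"
      by (simp add: jump_orbit_def)
    then show "dist y v < 1 / (1 + norm (of_nat m *\<^sub>R a + (a + v)))"
      using y[of "int (Suc m)"] by (simp add: dist_norm algebra_simps)
  qed
  ultimately show False
    using assms(2) by simp
qed

theorem translation_not_topological_shadowing:
  fixes a :: "'a::real_normed_vector"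
  assumes "a \<noteq> 0"
  shows "\<not> topological_shadowing (\<lambda>x. x + a)"
proof
  assume "topological_shadowing (\<lambda>x. x + a)"
  then obtain \<delta> where "\<delta> \<in> pos_cont" and shadowing:
      "\<And>xs. pseudo_orbit (\<lambda>x. x + a) \<delta> xs \<Longrightarrow> shadowed (\<lambda>x. x + a) (\<lambda>x. 1 / (1 + norm x)) xs"
    using inverse_one_plus_norm_pos_cont unfolding topological_shadowing_def by blast
  then have \<delta>_pos: "\<forall>x. \<delta> x > 0"
    by (simp add: pos_cont_def)
  define v where "v = (\<delta> a / (2 * norm a)) *\<^sub>R a"
  have "norm v = \<delta> a / 2"
    using assms \<delta>_pos by (simp add: v_def abs_of_pos)
  moreover have "\<delta> a > 0"
    using \<delta>_pos by simp
  ultimately have "norm v < \<delta> a" and "v \<noteq> 0"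
    by auto
  then show False
    using shadowing pseudo_orbit_jump_orbit[OF \<delta>_pos] jump_orbit_not_shadowed[OF assms] by blast
qed

theorem mainTheorem10:
  fixes i :: "'n::finite"
  shows "\<not> topological_shadowing (\<lambda>x::real^'n. x + axis i 1)"
  by (rule translation_not_topological_shadowing) (simp add: axis_eq_0_iff)

end
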